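(* Let $G$ be an infinite group and $S$ any finite generating set of $G$ (with $S=S^{-1}$, $e\notin S$). Then the average curvature over the ball of radius $n$ tends to zero: $$\lim_{n\to\infty}\frac{1}{|B_n|}\sum_{g\in B_n\smallsetminus\{e\}}\kappa(g)=0.$$
   Context: For a group $G$ with finite generating set $S$ ($S=S^{-1}$, $e\notin S$), $|x|$ denotes word length, $B_n=\{g\in G:|g|\le n\}$, $\mathrm{Av}(g)=\frac{1}{|S|}\sum_{a\in S}|a^{-1}ga|$, and for $g\neq e$ the curvature is $\kappa(g)=\frac{|g|-\mathrm{Av}(g)}{|g|}$. *)

theory Defs
  imports "HOL-Analysis.Analysis" "HOL-Algebra.Generated_Groups"
begin

definition word_length :: "('a, 'b) monoid_scheme \<Rightarrow> 'a set \<Rightarrow> 'a \<Rightarrow> nat" where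
  "word_length G S g =
     (LEAST n. \<exists>ws. length ws = n \<and> set ws \<subseteq> S \<and> foldr (\<otimes>\<^bsub>G\<^esub>) ws \<one>\<^bsub>G\<^esub> = g)"

definition word_ball :: "('a, 'b) monoid_scheme \<Rightarrow> 'a set \<Rightarrow> nat \<Rightarrow> 'a set" where
  "word_ball G S n = {g \<in> carrier G. word_length G S g \<le> n}"

definition avg_conj :: "('a, 'b) monoid_scheme \<Rightarrow> 'a set \<Rightarrow> 'a \<Rightarrow> real" where
  "avg_conj G S g =
     (1 / real (card S)) * (\<Sum>a\<in>S. real (word_length G S (inv\<^bsub>G\<^esub> a \<otimes>\<^bsub>G\<^esub> g \<otimes>\<^bsub>G\<^esub> a)))"

definition curvature :: "('a, 'b) monoid_scheme \<Rightarrow> 'a set \<Rightarrow> 'a \<Rightarrow> real" where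
  "curvature G S g =
     (real (word_length G S g) - avg_conj G S g) / real (word_length G S g)"

end

theory Submission
  imports Defs
begin

text \<open>Conjugating by a generator changes word length by at most 2, so
  \<open>|\<kappa>(g)| \<le> 2/|g|\<close>: the curvature tends to 0 outside finite sets of \<open>G\<close>, because
  balls are finite. In an infinite group the balls exhaust \<open>G\<close> and their sizes
  tend to infinity, so the finitely many elements of non-negligible curvature
  are swamped in the average.\<close>

lemma average_tendsto_zero_if_tendsto_zero_cofinite:
  fixes f :: "'a \<Rightarrow> real" and A :: "nat \<Rightarrow> 'a set"
  assumes f: "(f \<longlongrightarrow> 0) cofinite"
    and fin: "\<And>n. finite (A n)"
    and card: "filterlim (\<lambda>n. card (A n)) at_top sequentially"
  shows "(\<lambda>n. (1 / real (card (A n))) * (\<Sum>x\<in>A n. f x)) \<longlonglongrightarrow> 0"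
proof (rule tendsto_iff[THEN iffD2], intro allI impI)
  fix \<epsilon> :: real assume \<epsilon>: "\<epsilon> > 0"
  define E where "E = {x. \<epsilon> / 2 \<le> \<bar>f x\<bar>}"
  have "eventually (\<lambda>x. dist (f x) 0 < \<epsilon> / 2) cofinite"
    using tendsto_iff[THEN iffD1, OF f, rule_format, of "\<epsilon> / 2"] \<epsilon> by simp
  then have "finite E"
    unfolding eventually_cofinite E_def by (simp add: not_less)
  define C where "C = (\<Sum>x\<in>E. \<bar>f x\<bar>)"
  have sum_bound: "\<bar>\<Sum>x\<in>A n. f x\<bar> \<le> C + \<epsilon> / 2 * real (card (A n))" for n
  proof -
    have "\<bar>\<Sum>x\<in>A n. f x\<bar> \<le> (\<Sum>x\<in>A n. \<bar>f x\<bar>)"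
      by (rule sum_abs)
    also have "\<dots> = (\<Sum>x\<in>A n \<inter> E. \<bar>f x\<bar>) + (\<Sum>x\<in>A n - E. \<bar>f x\<bar>)"
      using fin by (simp add: sum.Int_Diff)
    also have "(\<Sum>x\<in>A n \<inter> E. \<bar>f x\<bar>) \<le> C"
      unfolding C_def using \<open>finite E\<close> by (intro sum_mono2) auto
    also have "(\<Sum>x\<in>A n - E. \<bar>f x\<bar>) \<le> (\<Sum>x\<in>A n. \<epsilon> / 2)"
      using fin \<epsilon> by (intro sum_le_included[where i = id]) (auto simp: E_def)
    finally show ?thesis by (simp add: mult.commute)
  qed
  have "filterlim (\<lambda>n. real (card (A n))) at_top sequentially"
    using filterlim_compose[OF filterlim_real_sequentially card] .
  then have "eventually (\<lambda>n. 2 * C / \<epsilon> + 1 \<le> real (card (A n))) sequentially"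
    by (simp add: filterlim_at_top)
  then show "eventually (\<lambda>n. dist ((1 / real (card (A n))) * (\<Sum>x\<in>A n. f x)) 0 < \<epsilon>)
      sequentially"
  proof (rule eventually_mono)
    fix n assume large: "2 * C / \<epsilon> + 1 \<le> real (card (A n))"
    have "2 * C / \<epsilon> \<ge> 0"
      unfolding C_def using \<epsilon> by (simp add: sum_nonneg)
    then have pos: "real (card (A n)) > 0"
      using large by linarith
    have "C < \<epsilon> / 2 * real (card (A n))"
      using large \<epsilon> by (simp add: field_simps)
    then have "\<bar>\<Sum>x\<in>A n. f x\<bar> < \<epsilon> * real (card (A n))"
      using sum_bound[of n] by linarith
    then show "dist ((1 / real (card (A n))) * (\<Sum>x\<in>A n. f x)) 0 < \<epsilon>"
      using pos by (simp add: abs_mult field_simps)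
  qed
qed

locale finite_generating_set = group G for G (structure) +
  fixes S :: "'a set"
  assumes finite_gens: "finite S"
    and gens_carrier: "S \<subseteq> carrier G"
    and gens_inv_closed: "\<forall>s\<in>S. inv s \<in> S"
    and generate_gens: "generate G S = carrier G"
begin

abbreviation word_prod :: "'a list \<Rightarrow> 'a" where
  "word_prod ws \<equiv> foldr (\<otimes>) ws \<one>"

lemma word_prod_carrier: "set ws \<subseteq> carrier G \<Longrightarrow> word_prod ws \<in> carrier G"
  by (induction ws) auto

lemma word_prod_append:
  "set ws \<subseteq> carrier G \<Longrightarrow> set vs \<subseteq> carrier G \<Longrightarrow>
    word_prod (ws @ vs) = word_prod ws \<otimes> word_prod vs"
  by (induction ws) (auto simp: m_assoc word_prod_carrier)

lemma exists_word: "g \<in> carrier G \<Longrightarrow> \<exists>ws. set ws \<subseteq> S \<and> word_prod ws = g"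
  unfolding generate_gens[symmetric]
proof (induction rule: generate.induct)
  case one
  show ?case by (intro exI[of _ "[]"]) auto
next
  case (incl h)
  then show ?case using gens_carrier by (intro exI[of _ "[h]"]) auto
next
  case (inv h)
  then show ?case using gens_carrier gens_inv_closed by (intro exI[of _ "[inv h]"]) auto
next
  case (eng h1 h2)
  then obtain ws vs where "set ws \<subseteq> S" "word_prod ws = h1" "set vs \<subseteq> S" "word_prod vs = h2"
    by blast
  then show ?case
    using gens_carrier word_prod_append[of ws vs] by (intro exI[of _ "ws @ vs"]) auto
qed

lemma word_length_le: "set ws \<subseteq> S \<Longrightarrow> word_prod ws = g \<Longrightarrow> word_length G S g \<le> length ws"
  unfolding word_length_def by (rule Least_le) blast

lemma exists_geodesic_word:
  assumes "g \<in> carrier G"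
  obtains ws where "length ws = word_length G S g" "set ws \<subseteq> S" "word_prod ws = g"
proof -
  have "\<exists>n ws. length ws = n \<and> set ws \<subseteq> S \<and> word_prod ws = g"
    using exists_word[OF assms] by blast
  then have "\<exists>ws. length ws = word_length G S g \<and> set ws \<subseteq> S \<and> word_prod ws = g"
    unfolding word_length_def by (rule LeastI_ex)
  then show ?thesis using that by blast
qed

lemma word_length_pos:
  assumes "g \<in> carrier G" "g \<noteq> \<one>"
  shows "word_length G S g > 0"
proof -
  obtain ws where "length ws = word_length G S g" "word_prod ws = g"
    using exists_geodesic_word[OF assms(1)] by metis
  then show ?thesis using assms(2) by (cases ws) auto
qed

lemma gens_nonempty_if_nontrivial:
  assumes "g \<in> carrier G" "g \<noteq> \<one>"
  shows "S \<noteq> {}"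
  using exists_word[OF assms(1)] assms(2) by (cases "S = {}") auto

lemma word_length_conj_le:
  assumes "a \<in> S" "h \<in> carrier G"
  shows "word_length G S (inv a \<otimes> h \<otimes> a) \<le> word_length G S h + 2"
proof -
  obtain ws where ws: "length ws = word_length G S h" "set ws \<subseteq> S" "word_prod ws = h"
    using exists_geodesic_word[OF assms(2)] by blast
  have a: "a \<in> carrier G" "inv a \<in> S"
    using assms gens_carrier gens_inv_closed by auto
  have "word_prod (inv a # ws @ [a]) = inv a \<otimes> (h \<otimes> a)"
    using word_prod_append[of ws "[a]"] ws a gens_carrier by auto
  also have "\<dots> = inv a \<otimes> h \<otimes> a"
    using a assms by (simp add: m_assoc)
  finally show ?thesis
    using word_length_le[of "inv a # ws @ [a]"] ws a assms by auto
qed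

lemma word_length_le_conj:
  assumes "a \<in> S" "g \<in> carrier G"
  shows "word_length G S g \<le> word_length G S (inv a \<otimes> g \<otimes> a) + 2"
proof -
  have a: "a \<in> carrier G" "inv a \<in> S"
    using assms gens_carrier gens_inv_closed by auto
  have "inv (inv a) \<otimes> (inv a \<otimes> g \<otimes> a) \<otimes> inv a = g"
    using a assms by (simp add: m_assoc[symmetric]) (simp add: m_assoc)
  then show ?thesis
    using word_length_conj_le[OF a(2), of "inv a \<otimes> g \<otimes> a"] a assms by simp
qed

lemma avg_conj_close:
  assumes "g \<in> carrier G" "S \<noteq> {}"
  shows "\<bar>real (word_length G S g) - avg_conj G S g\<bar> \<le> 2"
proof -
  let ?c = "real (card S)" and ?l = "\<lambda>x. real (word_length G S x)"
  have c: "?c > 0"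
    using assms(2) finite_gens by (simp add: card_gt_0_iff)
  have conj: "?l g - 2 \<le> ?l (inv a \<otimes> g \<otimes> a) \<and> ?l (inv a \<otimes> g \<otimes> a) \<le> ?l g + 2"
    if "a \<in> S" for a
    using word_length_conj_le[OF that assms(1)] word_length_le_conj[OF that assms(1)] by linarith
  have "(\<Sum>a\<in>S. ?l (inv a \<otimes> g \<otimes> a)) \<le> (\<Sum>a\<in>S. ?l g + 2)"
    using conj by (intro sum_mono) blast
  moreover have "(\<Sum>a\<in>S. ?l g - 2) \<le> (\<Sum>a\<in>S. ?l (inv a \<otimes> g \<otimes> a))"
    using conj by (intro sum_mono) blast
  ultimately have "?c * (?l g - 2) \<le> ?c * avg_conj G S g \<and> ?c * avg_conj G S g \<le> ?c * (?l g + 2)"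
    unfolding avg_conj_def using c by simp
  then show ?thesis
    using c by (simp add: abs_le_iff mult_le_cancel_left_pos)
qed

lemma abs_curvature_le:
  assumes "g \<in> carrier G" "g \<noteq> \<one>"
  shows "\<bar>curvature G S g\<bar> \<le> 2 / real (word_length G S g)"
  unfolding curvature_def abs_divide
  using avg_conj_close[OF assms(1) gens_nonempty_if_nontrivial[OF assms]] word_length_pos[OF assms]
  by (simp add: divide_right_mono)

lemma finite_word_ball: "finite (word_ball G S n)"
proof (rule finite_subset)
  show "word_ball G S n \<subseteq> word_prod ` {ws. set ws \<subseteq> S \<and> length ws \<le> n}"
  proof
    fix g assume "g \<in> word_ball G S n"
    then have g: "g \<in> carrier G" "word_length G S g \<le> n"
      unfolding word_ball_def by auto
    then obtain ws where "length ws = word_length G S g" "set ws \<subseteq> S" "word_prod ws = g"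
      using exists_geodesic_word by metis
    then show "g \<in> word_prod ` {ws. set ws \<subseteq> S \<and> length ws \<le> n}"
      using g by (intro image_eqI[of _ _ ws]) auto
  qed
  show "finite (word_prod ` {ws. set ws \<subseteq> S \<and> length ws \<le> n})"
    using finite_gens by (intro finite_imageI finite_lists_length_le)
qed

lemma card_word_ball_tendsto_infinity:
  assumes "infinite (carrier G)"
  shows "filterlim (\<lambda>n. card (word_ball G S n)) at_top sequentially"
  unfolding filterlim_at_top eventually_sequentially
proof
  fix M
  obtain F where F: "finite F" "card F = M" "F \<subseteq> carrier G"
    using infinite_arbitrarily_large[OF assms] by blast
  have "M \<le> card (word_ball G S n)" if "sum (word_length G S) F \<le> n" for n
  proof -
    have "word_length G S g \<le> n" if "g \<in> F" for g
      using member_le_sum[of g F "word_length G S"] F(1) that \<open>sum _ F \<le> n\<close> by simp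
    then have "F \<subseteq> word_ball G S n"
      using F(3) unfolding word_ball_def by auto
    then show ?thesis
      using card_mono[OF finite_word_ball] F(2) by blast
  qed
  then show "\<exists>N. \<forall>n\<ge>N. M \<le> card (word_ball G S n)" by blast
qed

lemma curvature_tendsto_zero_cofinite:
  "((\<lambda>g. if g \<in> carrier G - {\<one>} then curvature G S g else 0) \<longlongrightarrow> 0) cofinite"
proof (rule tendsto_iff[THEN iffD2], intro allI impI)
  fix \<epsilon> :: real assume \<epsilon>: "\<epsilon> > 0"
  define r where "r = nat \<lceil>2 / \<epsilon>\<rceil>"
  have "{g. \<not> dist (if g \<in> carrier G - {\<one>} then curvature G S g else 0) 0 < \<epsilon>}
      \<subseteq> word_ball G S r"
  proof
    fix g assume g: "g \<in> {g. \<not> dist (if g \<in> carrier G - {\<one>} then curvature G S g else 0) 0 < \<epsilon>}"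
    then have gc: "g \<in> carrier G" "g \<noteq> \<one>" and "\<epsilon> \<le> \<bar>curvature G S g\<bar>"
      using \<epsilon> by (auto split: if_splits)
    then have "\<epsilon> \<le> 2 / real (word_length G S g)"
      using abs_curvature_le by fastforce
    then have "real (word_length G S g) \<le> 2 / \<epsilon>"
      using \<epsilon> word_length_pos[OF gc] by (simp add: field_simps)
    also have "2 / \<epsilon> \<le> real r"
      unfolding r_def by (rule real_nat_ceiling_ge)
    finally show "g \<in> word_ball G S r"
      using gc unfolding word_ball_def by simp
  qed
  then show "eventually (\<lambda>g. dist (if g \<in> carrier G - {\<one>} then curvature G S g else 0) 0 < \<epsilon>)
      cofinite"
    unfolding eventually_cofinite using finite_word_ball finite_subset by blast
qed

end

theorem mainTheorem16:
  fixes G (structure) and S :: "'a set"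
  assumes "group G"
    and "infinite (carrier G)"
    and "finite S"
    and "S \<subseteq> carrier G"
    and "generate G S = carrier G"
    and "\<forall>s\<in>S. inv\<^bsub>G\<^esub> s \<in> S"
    and "\<one>\<^bsub>G\<^esub> \<notin> S"
  shows "(\<lambda>n. (1 / real (card (word_ball G S n))) *
            (\<Sum>g\<in>word_ball G S n - {\<one>\<^bsub>G\<^esub>}. curvature G S g)) \<longlonglongrightarrow> 0"
proof -
  interpret finite_generating_set G S
    using assms unfolding finite_generating_set_def finite_generating_set_axioms_def by auto
  let ?\<kappa> = "\<lambda>g. if g \<in> carrier G - {\<one>} then curvature G S g else 0"
  have "(\<Sum>g\<in>word_ball G S n - {\<one>}. curvature G S g) = (\<Sum>g\<in>word_ball G S n. ?\<kappa> g)" for n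
    using finite_word_ball by (intro sum.mono_neutral_cong_left) (auto simp: word_ball_def)
  moreover have "(\<lambda>n. (1 / real (card (word_ball G S n))) * (\<Sum>g\<in>word_ball G S n. ?\<kappa> g))
      \<longlonglongrightarrow> 0"
    using average_tendsto_zero_if_tendsto_zero_cofinite[OF curvature_tendsto_zero_cofinite
        finite_word_ball card_word_ball_tendsto_infinity[OF assms(2)]] .
  ultimately show ?thesis by simp
qed

end
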